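(* The reflection length and codimension functions do not coincide (i.e. there exists $g$ with $\ell(g)\neq\operatorname{codim}(g)$) in the following groups: (a) $G(m,p,n)$ with $1<p<m$ and $n\ge 2$; (b) $G(m,m,n)$ with $m\ge 3$ and $n\ge 3$.
   Context: $G(m,1,n)$ is the group of $n\times n$ monomial matrices whose nonzero entries are $m$-th roots of unity, acting on $V=\mathbb{C}^n$; for $p\mid m$, $G(m,p,n)$ is the subgroup of elements whose nonzero entries multiply to an $(m/p)$-th root of unity. A reflection is an element of finite order fixing a hyperplane pointwise. $\ell(g)$ is the minimal number of reflections of the group whose product is $g$ ($\ell(1)=0$), and $\operatorname{codim}(g)=n-\dim\{v\in V:gv=v\}$. *)

theory Defs
  imports "Jordan_Normal_Form.Matrix_Kernel"
begin

definition monomial_mat :: "nat \<Rightarrow> complex mat \<Rightarrow> bool" where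
  "monomial_mat n A \<longleftrightarrow> A \<in> carrier_mat n n \<and>
     (\<forall>i<n. \<exists>!j. j < n \<and> A $$ (i,j) \<noteq> 0) \<and>
     (\<forall>j<n. \<exists>!i. i < n \<and> A $$ (i,j) \<noteq> 0)"

definition Gm1n :: "nat \<Rightarrow> nat \<Rightarrow> complex mat set" where
  "Gm1n m n = {A. monomial_mat n A \<and>
     (\<forall>i<n. \<forall>j<n. A $$ (i,j) \<noteq> 0 \<longrightarrow> A $$ (i,j) ^ m = 1)}"

definition nz_prod :: "nat \<Rightarrow> complex mat \<Rightarrow> complex" where
  "nz_prod n A = (\<Prod>ij\<in>{(i,j). i < n \<and> j < n \<and> A $$ (i,j) \<noteq> 0}. A $$ ij)"

definition Gmpn :: "nat \<Rightarrow> nat \<Rightarrow> nat \<Rightarrow> complex mat set" where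
  "Gmpn m p n = {A \<in> Gm1n m n. nz_prod n A ^ (m div p) = 1}"

definition fixed_space :: "nat \<Rightarrow> complex mat \<Rightarrow> complex vec set" where
  "fixed_space n g = {v \<in> carrier_vec n. g *\<^sub>v v = v}"

definition codim :: "nat \<Rightarrow> complex mat \<Rightarrow> nat" where
  "codim n g = n - kernel_dim (g - 1\<^sub>m n)"

text \<open>Reflection: non-identity element of finite order whose fixed space
  (= kernel of g - 1) contains a hyperplane, i.e. has dimension at least n - 1.\<close>
definition is_reflection :: "nat \<Rightarrow> complex mat \<Rightarrow> bool" where
  "is_reflection n g \<longleftrightarrow> g \<in> carrier_mat n n \<and> g \<noteq> 1\<^sub>m n \<and>
     (\<exists>k>0. g ^\<^sub>m k = 1\<^sub>m n) \<and> n - 1 \<le> kernel_dim (g - 1\<^sub>m n)"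

definition reflections :: "nat \<Rightarrow> complex mat set \<Rightarrow> complex mat set" where
  "reflections n G = {r \<in> G. is_reflection n r}"

definition refl_length :: "nat \<Rightarrow> complex mat set \<Rightarrow> complex mat \<Rightarrow> nat" where
  "refl_length n G g = (LEAST k. \<exists>rs. length rs = k \<and> set rs \<subseteq> reflections n G \<and>
      foldr (*) rs (1\<^sub>m n) = g)"

end

theory Submission
  imports Defs "Jordan_Normal_Form.DL_Rank_Submatrix"
begin

text \<open>Let z be a primitive m-th root of unity.

  (a) For 1 < p < m the diagonal matrix g = diag(z, z^(p-1), 1, ..., 1) lies in G(m,p,n) and has
  codimension 2. It is a product of three reflections, but not of two: if a product of two
  reflections has no zero on its diagonal, then either both are of transposition type on the
  same pair of coordinates, and the two corresponding diagonal entries multiply to 1 while all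
  others are 1, or both are diagonal, and then all diagonal entries are (m/p)-th roots of unity.
  Neither fits g, since z^p \<noteq> 1 and z^(m/p) \<noteq> 1.

  (b) In G(m,m,n) every reflection is of transposition type, hence has determinant -1. The matrix
  diag(z, z, z^-2, 1, ..., 1) has codimension 3 and determinant 1, so it is a product of an even
  number of reflections and its reflection length is not 3.\<close>

lemma exists_primitive_root_of_unity:
  assumes "0 < m"
  obtains z :: complex where "z ^ m = 1" "\<And>k. 0 < k \<Longrightarrow> k < m \<Longrightarrow> z ^ k \<noteq> 1"
proof
  let ?f = "\<lambda>k. cis (2 * pi * real k / real m)"
  have bij: "bij_betw ?f {..<m} {z. z ^ m = 1}" by (rule bij_betw_roots_unity[OF assms])
  have pow: "?f 1 ^ k = ?f k" for k by (simp add: DeMoivre mult_ac)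
  show "?f 1 ^ m = 1" using pow[of m] assms by simp
  fix k assume k: "0 < k" "k < m"
  have "?f k \<noteq> ?f 0"
  proof
    assume "?f k = ?f 0"
    with bij k have "k = 0" unfolding bij_betw_def inj_on_def using assms by blast
    with k show False by simp
  qed
  then show "?f 1 ^ k \<noteq> 1" unfolding pow by simp
qed

lemma root_of_unity_power:
  fixes z :: "'a::comm_monoid_mult"
  assumes "z ^ m = 1"
  shows "(z ^ k) ^ m = 1"
  using assms by (simp add: power_mult[symmetric] mult.commute[of k] power_mult)

lemma prod_lessThan_eq_prod_support:
  fixes f :: "nat \<Rightarrow> 'a::comm_monoid_mult"
  assumes "S \<subseteq> {..<n}" and "\<And>t. t < n \<Longrightarrow> t \<notin> S \<Longrightarrow> f t = 1"
  shows "(\<Prod>t<n. f t) = (\<Prod>t\<in>S. f t)"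
  by (rule prod.mono_neutral_right) (use assms in auto)

lemma index_mult_mat_row_single:
  fixes A B :: "'a::comm_ring_1 mat"
  assumes "A \<in> carrier_mat n n" "B \<in> carrier_mat n n" "x < n" "y < n" "s < n"
    and "\<And>k. k < n \<Longrightarrow> k \<noteq> s \<Longrightarrow> A $$ (x,k) = 0"
  shows "(A * B) $$ (x,y) = A $$ (x,s) * B $$ (s,y)"
proof -
  have "(A * B) $$ (x,y) = (\<Sum>k\<in>{0..<n}. A $$ (x,k) * B $$ (k,y))"
    using assms by (simp add: scalar_prod_def)
  also have "\<dots> = (\<Sum>k\<in>{s}. A $$ (x,k) * B $$ (k,y))"
    by (rule sum.mono_neutral_right) (use assms in auto)
  finally show ?thesis by simp
qed

section \<open>Rank, kernel dimension and minors\<close>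

lemma kernel_dim_plus_rank:
  fixes A :: "'a::field mat"
  assumes A: "A \<in> carrier_mat n n"
  shows "kernel_dim A + vec_space.rank n A = n"
proof -
  interpret V: vec_space "TYPE('a)" n .
  interpret K: kernel n n A by (unfold_locales, rule A)
  have hom: "(\<lambda>v. A *\<^sub>v v) \<in> LinearCombinations.module_hom class_ring V.V V.V"
    unfolding LinearCombinations.module_hom_def using A
    by (auto simp: mult_add_distrib_mat_vec mult_mat_vec)
  interpret L: linear_map class_ring V.V V.V "\<lambda>v. A *\<^sub>v v"
    by (unfold_locales, rule hom)
  have ker: "L.kerT = mat_kernel A"
    unfolding mod_hom.ker_def[OF L.mod_hom_axioms] mat_kernel_def using A by auto
  have im: "L.imT = V.span (set (cols A))"
    unfolding mod_hom.im_def[OF L.mod_hom_axioms] using V.col_space_eq[OF A] A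
    unfolding V.col_space_def by auto
  have "vectorspace.dim class_ring (V.V\<lparr>carrier := L.imT\<rparr>)
      + vectorspace.dim class_ring (V.V\<lparr>carrier := L.kerT\<rparr>) = V.dim"
    by (rule L.rank_nullity) simp
  then show ?thesis unfolding ker im V.dim_is_n V.rank_def kernel_dim_def using A by simp
qed

lemma codim_eq_rank: "codim n g = vec_space.rank n (g - 1\<^sub>m n)"
  unfolding codim_def
  using kernel_dim_plus_rank[OF minus_carrier_mat[OF one_carrier_mat], of g n] by simp

lemma is_reflection_iff_codim:
  "is_reflection n g \<longleftrightarrow>
     g \<in> carrier_mat n n \<and> g \<noteq> 1\<^sub>m n \<and> (\<exists>k>0. g ^\<^sub>m k = 1\<^sub>m n) \<and> codim n g \<le> 1"
  unfolding is_reflection_def codim_def by auto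

lemma pick_doubleton:
  assumes "k < (l::nat)"
  shows "pick {k,l} 0 = k" "pick {k,l} 1 = l"
proof -
  show 0: "pick {k,l} 0 = k" unfolding pick.simps using assms by (intro Least_equality) auto
  have "pick {k,l} 1 = (LEAST a. a \<in> {k,l} \<and> a > pick {k,l} 0)"
    using pick.simps(2)[of "{k,l}" 0] by simp
  also have "\<dots> = l" unfolding 0 using assms by (intro Least_equality) auto
  finally show "pick {k,l} 1 = l" .
qed

lemma det_2x2:
  fixes A :: "'a::comm_ring_1 mat"
  assumes A: "A \<in> carrier_mat 2 2"
  shows "det A = A $$ (0,0) * A $$ (1,1) - A $$ (0,1) * A $$ (1,0)"
proof -
  let ?\<tau> = "Transposition.transpose (0::nat) 1"
  have U: "{0..<2::nat} = {0,1}" by auto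
  have P: "{p. p permutes {0::nat,1}} = {id, ?\<tau>}"
    by (simp add: permutes_doubleton_iff set_eq_iff)
  have ne: "id \<noteq> ?\<tau>"
    by (metis id_apply transpose_apply_first zero_neq_one)
  have "det A = (\<Sum>p\<in>{id, ?\<tau>}. signof p * (\<Prod>i\<in>{0,1}. A $$ (i, p i)))"
    unfolding det_def'[OF A] U P ..
  also have "\<dots> = A $$ (0,0) * A $$ (1,1) - A $$ (0,1) * A $$ (1,0)"
    using ne by (simp add: sign_swap_id)
  finally show ?thesis .
qed

lemma rank_ge_2_if_minor_nonzero:
  fixes A :: "'a::field mat"
  assumes A: "A \<in> carrier_mat n n" and kl: "k < l" "l < n" and ij: "i < j" "j < n"
    and minor: "A $$ (k,i) * A $$ (l,j) \<noteq> A $$ (k,j) * A $$ (l,i)"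
  shows "2 \<le> vec_space.rank n A"
proof -
  interpret V: vec_space "TYPE('a)" n .
  have rows: "{a. a < dim_row A \<and> a \<in> {k,l}} = {k,l}" and cols: "{a. a < dim_col A \<and> a \<in> {i,j}} = {i,j}"
    using A kl ij by auto
  have card: "card {k,l} = 2" "card {i,j} = 2" using kl ij by auto
  have S: "submatrix A {k,l} {i,j} \<in> carrier_mat 2 2"
    by (rule carrier_matI) (simp_all only: dim_submatrix rows cols card)
  have e: "submatrix A {k,l} {i,j} $$ (a,b) = A $$ (pick {k,l} a, pick {i,j} b)" if "a < 2" "b < 2" for a b
    by (rule submatrix_index) (use that rows cols card in simp_all)
  have "det (submatrix A {k,l} {i,j}) = A $$ (k,i) * A $$ (l,j) - A $$ (k,j) * A $$ (l,i)"
    unfolding det_2x2[OF S] using e[of 0 0] e[of 0 1] e[of 1 0] e[of 1 1]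
    by (simp del: pick.simps add: pick_doubleton[OF kl(1), unfolded One_nat_def]
        pick_doubleton[OF ij(1), unfolded One_nat_def])
  with minor have "det (submatrix A {k,l} {i,j}) \<noteq> 0" by simp
  from V.rank_gt_minor[OF A this] show ?thesis using cols card A by simp
qed

lemma minor_eq_if_rank_le_1:
  fixes A :: "'a::field mat"
  assumes A: "A \<in> carrier_mat n n" and rank: "vec_space.rank n A \<le> 1"
    and "k < n" "l < n" "i < n" "j < n"
  shows "A $$ (k,i) * A $$ (l,j) = A $$ (k,j) * A $$ (l,i)"
proof -
  have sorted: "A $$ (k,i) * A $$ (l,j) = A $$ (k,j) * A $$ (l,i)"
    if "k < l" "l < n" "i < j" "j < n" for k l i j
    using rank_ge_2_if_minor_nonzero[OF A that] rank by force
  consider "k = l" | "i = j" | "k < l" "i < j" | "k < l" "j < i" | "l < k" "i < j" | "l < k" "j < i"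
    by linarith
  then show ?thesis
    using sorted[of k l i j] sorted[of k l j i] sorted[of l k i j] sorted[of l k j i] assms(3-)
    by cases (auto simp: mult.commute)
qed

section \<open>Diagonal matrices\<close>

lemma index_mat_diag [simp]:
  "i < n \<Longrightarrow> j < n \<Longrightarrow> mat_diag n f $$ (i,j) = (if i = j then f i else 0)"
  unfolding mat_diag_def by simp

lemma dim_mat_diag [simp]: "dim_row (mat_diag n f) = n" "dim_col (mat_diag n f) = n"
  unfolding mat_diag_def by simp_all

lemma mat_diag_minus:
  fixes f g :: "nat \<Rightarrow> 'a::group_add"
  shows "mat_diag n f - mat_diag n g = mat_diag n (\<lambda>t. f t - g t)"
  by (rule eq_matI) auto

lemma mat_diag_add:
  fixes f g :: "nat \<Rightarrow> 'a::monoid_add"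
  shows "mat_diag n f + mat_diag n g = mat_diag n (\<lambda>t. f t + g t)"
  by (rule eq_matI) auto

lemma mat_diag_pow:
  fixes f :: "nat \<Rightarrow> 'a::comm_semiring_1"
  shows "mat_diag n f ^\<^sub>m k = mat_diag n (\<lambda>t. f t ^ k)"
  by (induction k) (simp_all add: power_Suc2 del: power_Suc)

lemma det_mat_diag: "det (mat_diag n f) = (\<Prod>t<n. f t)"
proof -
  have "upper_triangular (mat_diag n f)" unfolding upper_triangular_def by auto
  then have "det (mat_diag n f) = prod_list (diag_mat (mat_diag n f))"
    by (rule det_upper_triangular[OF _ mat_diag_dim])
  also have "\<dots> = (\<Prod>t<n. f t)"
    unfolding prod_list_diag_prod by (simp add: atLeast0LessThan)
  finally show ?thesis .
qed

lemma rank_mat_diag_le: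
  fixes f :: "nat \<Rightarrow> 'a::field"
  assumes "finite S" and "\<And>t. t < n \<Longrightarrow> t \<notin> S \<Longrightarrow> f t = 0"
  shows "vec_space.rank n (mat_diag n f) \<le> card S"
  using assms
proof (induction S arbitrary: f rule: finite_induct)
  case empty
  interpret V: vec_space "TYPE('a)" n .
  have "mat_diag n f = 0\<^sub>m n n" by (rule eq_matI) (use empty in auto)
  then show ?case using V.rank_0I by simp
next
  case (insert x S)
  interpret V: vec_space "TYPE('a)" n .
  let ?e = "\<lambda>t. if t = x then f x else 0"
  have split: "mat_diag n f = mat_diag n (f(x := 0)) + mat_diag n ?e"
    unfolding mat_diag_add by (rule arg_cong[where f = "mat_diag n"]) auto
  have "V.rank (mat_diag n ?e) \<le> 1"
    by (rule V.rank_le_1_product_entries[OF mat_diag_dim,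
          where f = ?e and g = "\<lambda>c. if c = x then 1 else 0"]) auto
  moreover have "V.rank (mat_diag n (f(x := 0))) \<le> card S"
    by (rule insert.IH) (use insert.prems in auto)
  moreover have "V.rank (mat_diag n f)
      \<le> V.rank (mat_diag n (f(x := 0))) + V.rank (mat_diag n ?e)"
    unfolding split by (rule V.rank_subadditive[where nc = n]) simp_all
  ultimately show ?case using insert.hyps by simp
qed

lemma submatrix_mat_diag_lessThan:
  assumes "k \<le> n"
  shows "submatrix (mat_diag n f) {..<k} {..<k} = mat_diag k f"
proof -
  have "{i. i < n \<and> i \<in> {..<k}} = {..<k}" using assms by auto
  then have card: "card {i. i < n \<and> i \<in> {..<k}} = k" by simp
  have pick: "pick {..<k} a = a" if "a < k" for a
  proof -
    have "{x \<in> {..<k}. x < a} = {..<a}" using that by auto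
    then show ?thesis using pick_card_in_set[of a "{..<k}"] that by simp
  qed
  show ?thesis
  proof (rule eq_matI)
    fix a b assume "a < dim_row (mat_diag k f)" "b < dim_col (mat_diag k f)"
    then have ab: "a < k" "b < k" by auto
    then have "submatrix (mat_diag n f) {..<k} {..<k} $$ (a,b) = mat_diag n f $$ (pick {..<k} a, pick {..<k} b)"
      by (intro submatrix_index) (simp_all only: card dim_mat_diag)
    then show "submatrix (mat_diag n f) {..<k} {..<k} $$ (a,b) = mat_diag k f $$ (a,b)"
      using ab pick assms by simp
  qed (simp_all only: dim_submatrix card dim_mat_diag)
qed

lemma rank_mat_diag_ge:
  fixes f :: "nat \<Rightarrow> 'a::field"
  assumes "k \<le> n" and "\<And>t. t < k \<Longrightarrow> f t \<noteq> 0"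
  shows "k \<le> vec_space.rank n (mat_diag n f)"
proof -
  interpret V: vec_space "TYPE('a)" n .
  have "det (submatrix (mat_diag n f) {..<k} {..<k}) \<noteq> 0"
    unfolding submatrix_mat_diag_lessThan[OF assms(1)] det_mat_diag using assms(2) by simp
  moreover have "{j. j < n \<and> j \<in> {..<k}} = {..<k}" using assms(1) by auto
  ultimately show ?thesis using V.rank_gt_minor[OF mat_diag_dim] by fastforce
qed

lemma codim_mat_diag_eq_rank:
  fixes f :: "nat \<Rightarrow> complex"
  shows "codim n (mat_diag n f) = vec_space.rank n (mat_diag n (\<lambda>t. f t - 1))"
  using mat_diag_minus[of n f "\<lambda>_. 1"] unfolding codim_eq_rank by simp

lemma codim_mat_diag_le:
  assumes "finite S" and "\<And>t. t < n \<Longrightarrow> t \<notin> S \<Longrightarrow> f t = 1"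
  shows "codim n (mat_diag n f) \<le> card S"
  unfolding codim_mat_diag_eq_rank by (rule rank_mat_diag_le) (use assms in auto)

lemma codim_mat_diag:
  assumes "k \<le> n" and "\<And>t. t < n \<Longrightarrow> f t \<noteq> 1 \<longleftrightarrow> t < k"
  shows "codim n (mat_diag n f) = k"
proof -
  have "codim n (mat_diag n f) \<le> k"
    using codim_mat_diag_le[of "{..<k}" n f] assms by force
  moreover have "k \<le> codim n (mat_diag n f)"
    unfolding codim_mat_diag_eq_rank by (rule rank_mat_diag_ge) (use assms in auto)
  ultimately show ?thesis by simp
qed

section \<open>Monomial matrices and reflections of G(m,p,n)\<close>

lemma monomial_mat_permutes:
  assumes A: "A \<in> carrier_mat n n" and \<sigma>: "\<sigma> permutes {..<n}"
    and nz: "\<And>i j. i < n \<Longrightarrow> j < n \<Longrightarrow> A $$ (i,j) \<noteq> 0 \<longleftrightarrow> j = \<sigma> i"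
  shows "monomial_mat n A" and "nz_prod n A = (\<Prod>i<n. A $$ (i, \<sigma> i))"
proof -
  have bij: "bij_betw \<sigma> {..<n} {..<n}" by (rule permutes_imp_bij[OF \<sigma>])
  then have \<sigma>n: "\<sigma> i < n" if "i < n" for i using that unfolding bij_betw_def by auto
  show "monomial_mat n A" unfolding monomial_mat_def
  proof (intro conjI allI impI A)
    fix i assume i: "i < n"
    show "\<exists>!j. j < n \<and> A $$ (i, j) \<noteq> 0" using nz[OF i] \<sigma>n[OF i] by auto
  next
    fix j assume j: "j < n"
    then obtain i where i: "i < n" "\<sigma> i = j"
      using bij unfolding bij_betw_def by (metis imageE lessThan_iff)
    show "\<exists>!i. i < n \<and> A $$ (i, j) \<noteq> 0"
    proof (rule ex1I[of _ i])
      show "i < n \<and> A $$ (i, j) \<noteq> 0" using nz[OF i(1) j] i by auto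
      fix i' assume "i' < n \<and> A $$ (i', j) \<noteq> 0"
      then have "i' < n" "\<sigma> i' = \<sigma> i" using nz[OF _ j] i by auto
      then show "i' = i" using bij i(1) unfolding bij_betw_def inj_on_def by auto
    qed
  qed
  have "{(i,j). i < n \<and> j < n \<and> A $$ (i,j) \<noteq> 0} = (\<lambda>i. (i, \<sigma> i)) ` {..<n}"
    using nz \<sigma>n by auto
  moreover have "inj_on (\<lambda>i. (i, \<sigma> i)) {..<n}" by (auto simp: inj_on_def)
  ultimately show "nz_prod n A = (\<Prod>i<n. A $$ (i, \<sigma> i))"
    unfolding nz_prod_def by (simp add: prod.reindex comp_def)
qed

lemma
  assumes "\<And>t. t < n \<Longrightarrow> f t \<noteq> 0"
  shows monomial_mat_diag: "monomial_mat n (mat_diag n f)"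
    and nz_prod_mat_diag: "nz_prod n (mat_diag n f) = (\<Prod>t<n. f t)"
proof -
  have nz: "\<And>i j. i < n \<Longrightarrow> j < n \<Longrightarrow> mat_diag n f $$ (i,j) \<noteq> 0 \<longleftrightarrow> j = id i"
    using assms by auto
  note mono = monomial_mat_permutes[OF mat_diag_dim permutes_id nz]
  show "monomial_mat n (mat_diag n f)" by (rule mono(1))
  show "nz_prod n (mat_diag n f) = (\<Prod>t<n. f t)" using mono(2) by simp
qed

lemma mat_diag_in_Gmpn:
  assumes "0 < m" "\<And>t. t < n \<Longrightarrow> f t ^ m = 1" "(\<Prod>t<n. f t) ^ (m div p) = 1"
  shows "mat_diag n f \<in> Gmpn m p n"
proof -
  have "f t \<noteq> 0" if "t < n" for t using assms(1) assms(2)[OF that] by (auto simp: power_0_left)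
  then show ?thesis
    unfolding Gmpn_def Gm1n_def using assms monomial_mat_diag nz_prod_mat_diag by auto
qed

text \<open>The transposition-type reflection sending e_i to a e_j and e_j to a^-1 e_i; for a = 1 the
  permutation matrix of the transposition (i j).\<close>
definition swap_mat :: "nat \<Rightarrow> nat \<Rightarrow> nat \<Rightarrow> complex \<Rightarrow> complex mat" where
  "swap_mat n i j a = mat n n (\<lambda>(r,c).
     if r = i \<and> c = j then inverse a else if r = j \<and> c = i then a
     else if r = c \<and> r \<noteq> i \<and> r \<noteq> j then 1 else 0)"

lemma swap_mat_dim [simp]: "swap_mat n i j a \<in> carrier_mat n n"
  unfolding swap_mat_def by simp

lemma dim_swap_mat [simp]: "dim_row (swap_mat n i j a) = n" "dim_col (swap_mat n i j a) = n"
  unfolding swap_mat_def by simp_all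

lemma index_swap_mat [simp]:
  "r < n \<Longrightarrow> c < n \<Longrightarrow> swap_mat n i j a $$ (r,c) =
    (if r = i \<and> c = j then inverse a else if r = j \<and> c = i then a
     else if r = c \<and> r \<noteq> i \<and> r \<noteq> j then 1 else 0)"
  unfolding swap_mat_def by simp

lemma swap_mat_mult:
  assumes i: "i < n" and j: "j < n" and ij: "i \<noteq> j"
  shows "swap_mat n i j a * swap_mat n i j c
    = mat_diag n (\<lambda>t. if t = i then c / a else if t = j then a / c else 1)"
proof (rule eq_matI)
  fix x y assume "x < dim_row (mat_diag n (\<lambda>t. if t = i then c / a else if t = j then a / c else 1))"
    "y < dim_col (mat_diag n (\<lambda>t. if t = i then c / a else if t = j then a / c else 1))"
  then have x: "x < n" and y: "y < n" by auto
  define s where "s = (if x = i then j else if x = j then i else x)"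
  have s: "s < n" using i j x unfolding s_def by auto
  have "(swap_mat n i j a * swap_mat n i j c) $$ (x,y) = swap_mat n i j a $$ (x,s) * swap_mat n i j c $$ (s,y)"
    by (rule index_mult_mat_row_single[OF swap_mat_dim swap_mat_dim x y s])
      (use x ij in \<open>auto simp: s_def split: if_splits\<close>)
  also have "\<dots> = mat_diag n (\<lambda>t. if t = i then c / a else if t = j then a / c else 1) $$ (x,y)"
    using x y i j ij unfolding s_def
    by (cases "x = i"; cases "x = j") (simp_all add: divide_inverse mult.commute)
  finally show "(swap_mat n i j a * swap_mat n i j c) $$ (x,y)
      = mat_diag n (\<lambda>t. if t = i then c / a else if t = j then a / c else 1) $$ (x,y)" .
qed auto

lemma
  assumes "i < n" "j < n" "i \<noteq> j" "a \<noteq> 0"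
  shows monomial_swap_mat: "monomial_mat n (swap_mat n i j a)"
    and nz_prod_swap_mat: "nz_prod n (swap_mat n i j a) = 1"
proof -
  let ?\<tau> = "Transposition.transpose i j"
  have \<tau>: "?\<tau> permutes {..<n}" by (rule permutes_swap_id) (use assms in auto)
  have nz: "swap_mat n i j a $$ (x,y) \<noteq> 0 \<longleftrightarrow> y = ?\<tau> x" if "x < n" "y < n" for x y
    using that assms by (cases "x = i"; cases "x = j") (auto simp: transpose_def)
  note mono = monomial_mat_permutes[OF swap_mat_dim \<tau> nz]
  show "monomial_mat n (swap_mat n i j a)" by (rule mono(1))
  have "(\<Prod>t<n. swap_mat n i j a $$ (t, ?\<tau> t)) = (\<Prod>t\<in>{i,j}. swap_mat n i j a $$ (t, ?\<tau> t))"
    by (rule prod_lessThan_eq_prod_support) (use assms in \<open>auto simp: transpose_def\<close>)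
  then show "nz_prod n (swap_mat n i j a) = 1" using mono(2) assms by simp
qed

lemma is_reflection_swap_mat:
  assumes i: "i < n" and j: "j < n" and ij: "i \<noteq> j" and a: "a \<noteq> 0"
  shows "is_reflection n (swap_mat n i j a)"
  unfolding is_reflection_iff_codim
proof (intro conjI exI)
  interpret V: vec_space "TYPE(complex)" n .
  show "swap_mat n i j a \<in> carrier_mat n n" by simp
  show "swap_mat n i j a \<noteq> 1\<^sub>m n"
  proof
    assume "swap_mat n i j a = 1\<^sub>m n"
    then have "swap_mat n i j a $$ (i,i) = 1\<^sub>m n $$ (i,i)" by simp
    then show False using i ij by simp
  qed
  have "(\<lambda>t. if t = i then a / a else if t = j then a / a else 1) = (\<lambda>_. 1::complex)"
    using a by auto
  then show "swap_mat n i j a ^\<^sub>m 2 = 1\<^sub>m n"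
    by (simp add: numeral_2_eq_2 swap_mat_mult[OF i j ij])
  show "(0::nat) < 2" by simp
  let ?f = "\<lambda>r. if r = j then a else if r = i then -1 else (0::complex)"
  let ?g = "\<lambda>c. if c = i then 1 else if c = j then - inverse a else (0::complex)"
  have "V.rank (swap_mat n i j a - 1\<^sub>m n) \<le> 1"
  proof (rule V.rank_le_1_product_entries[where f = ?f and g = ?g])
    fix r c assume "r < dim_row (swap_mat n i j a - 1\<^sub>m n)" "c < dim_col (swap_mat n i j a - 1\<^sub>m n)"
    then have "r < n" "c < n" by auto
    then show "(swap_mat n i j a - 1\<^sub>m n) $$ (r,c) = ?f r * ?g c"
      using ij a by (cases "r = i"; cases "r = j"; cases "c = i"; cases "c = j") auto
  qed (rule minus_carrier_mat[OF one_carrier_mat])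
  then show "codim n (swap_mat n i j a) \<le> 1" unfolding codim_eq_rank .
qed

lemma is_reflection_mat_diag_single:
  assumes s: "s < n" and d: "d \<noteq> 1" "0 < k" "d ^ k = 1"
  shows "is_reflection n (mat_diag n (\<lambda>t. if t = s then d else 1))"
  unfolding is_reflection_iff_codim
proof (intro conjI exI)
  let ?D = "mat_diag n (\<lambda>t. if t = s then d else 1)"
  show "?D \<in> carrier_mat n n" by simp
  show "?D \<noteq> 1\<^sub>m n"
  proof
    assume "?D = 1\<^sub>m n"
    then have "?D $$ (s,s) = 1\<^sub>m n $$ (s,s)" by simp
    then show False using s d by simp
  qed
  have "(\<lambda>t. (if t = s then d else 1) ^ k) = (\<lambda>_. 1::complex)" using d by auto
  then show "?D ^\<^sub>m k = 1\<^sub>m n" unfolding mat_diag_pow by simp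
  show "0 < k" by fact
  show "codim n ?D \<le> 1" using codim_mat_diag_le[of "{s}" n] by simp
qed

lemma swap_mat_in_reflections:
  assumes "i < n" "j < n" "i \<noteq> j" "a \<noteq> 0" "a ^ m = 1"
  shows "swap_mat n i j a \<in> reflections n (Gmpn m p n)"
proof -
  have "inverse a ^ m = 1" using assms(5) by (simp add: power_inverse)
  then show ?thesis
    unfolding reflections_def Gmpn_def Gm1n_def
    using assms monomial_swap_mat nz_prod_swap_mat is_reflection_swap_mat by auto
qed

lemma mat_diag_single_in_reflections:
  assumes "s < n" "0 < m" "d \<noteq> 1" "d ^ m = 1" "d ^ (m div p) = 1"
  shows "mat_diag n (\<lambda>t. if t = s then d else 1) \<in> reflections n (Gmpn m p n)"
proof -
  have "(\<Prod>t<n. if t = s then d else 1) = d"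
    using prod_lessThan_eq_prod_support[of "{s}" n "\<lambda>t. if t = s then d else 1"] assms(1) by simp
  then show ?thesis
    unfolding reflections_def
    using assms mat_diag_in_Gmpn[of m n _ p] is_reflection_mat_diag_single[of s n d m] by auto
qed

lemma index_mult_diagonal_mat_left:
  fixes A B :: "'a::comm_ring_1 mat"
  assumes "diagonal_mat A" "A \<in> carrier_mat n n" "B \<in> carrier_mat n n" "x < n" "y < n"
  shows "(A * B) $$ (x,y) = A $$ (x,x) * B $$ (x,y)"
  by (rule index_mult_mat_row_single) (use assms in \<open>auto simp: diagonal_mat_def\<close>)

locale Gm1n_reflection =
  fixes m n :: nat and r :: "complex mat"
  assumes in_Gm1n: "r \<in> Gm1n m n" and reflection: "is_reflection n r"
begin

lemma carrier: "r \<in> carrier_mat n n"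
  using reflection unfolding is_reflection_def by simp

lemma row_unique: "i < n \<Longrightarrow> \<exists>!j. j < n \<and> r $$ (i,j) \<noteq> 0"
  and col_unique: "j < n \<Longrightarrow> \<exists>!i. i < n \<and> r $$ (i,j) \<noteq> 0"
  using in_Gm1n unfolding Gm1n_def monomial_mat_def by auto

lemma row_zero:
  assumes "i < n" "j < n" "r $$ (i,j) \<noteq> 0" "k < n" "k \<noteq> j"
  shows "r $$ (i,k) = 0"
  using row_unique[OF assms(1)] assms by auto

lemma col_zero:
  assumes "i < n" "j < n" "r $$ (i,j) \<noteq> 0" "k < n" "k \<noteq> i"
  shows "r $$ (k,j) = 0"
  using col_unique[OF assms(2)] assms by auto

text \<open>The 2x2 minors of r - 1 vanish because it has rank at most one.\<close>
lemma minor_eq: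
  assumes "k < n" "l < n" "i < n" "j < n"
  shows "(r $$ (k,i) - (if k = i then 1 else 0)) * (r $$ (l,j) - (if l = j then 1 else 0))
       = (r $$ (k,j) - (if k = j then 1 else 0)) * (r $$ (l,i) - (if l = i then 1 else 0))"
proof -
  have "vec_space.rank n (r - 1\<^sub>m n) \<le> 1"
    using reflection unfolding is_reflection_iff_codim codim_eq_rank by simp
  from minor_eq_if_rank_le_1[OF minus_carrier_mat[OF one_carrier_mat] this assms]
  show ?thesis using assms carrier by simp
qed

lemma swap_type:
  assumes i: "i < n" and j: "j < n" and ij: "i \<noteq> j" and nz: "r $$ (i,j) \<noteq> 0"
  shows "r $$ (i,i) = 0" "r $$ (j,j) = 0" "r $$ (i,j) * r $$ (j,i) = 1"
    and "\<And>t. t < n \<Longrightarrow> t \<noteq> i \<Longrightarrow> t \<noteq> j \<Longrightarrow> r $$ (t,t) = 1"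
proof -
  show ii: "r $$ (i,i) = 0" using row_zero[OF i j nz i] ij by simp
  show jj: "r $$ (j,j) = 0" using col_zero[OF i j nz j] ij by simp
  show "r $$ (i,j) * r $$ (j,i) = 1" using minor_eq[OF i j i j] ii jj ij by simp
  fix t assume t: "t < n" "t \<noteq> i" "t \<noteq> j"
  have "r $$ (i,t) = 0" using row_zero[OF i j nz t(1)] t by simp
  then show "r $$ (t,t) = 1" using minor_eq[OF t(1) i t(1) i] ii t by simp
qed

lemma swap_type_support:
  assumes "i < n" "j < n" "i \<noteq> j" "r $$ (i,j) \<noteq> 0"
    and a: "a < n" and b: "b < n" and ab: "a \<noteq> b" and "r $$ (a,b) \<noteq> 0"
  shows "(a = i \<and> b = j) \<or> (a = j \<and> b = i)"
proof -
  note ij = swap_type[OF assms(1-4)] and ab' = swap_type[OF assms(5-8)]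
  have "a = i \<or> a = j" using ij(4)[OF a] ab'(1) by auto
  moreover have "b = i \<or> b = j" using ij(4)[OF b] ab'(2) by auto
  ultimately show ?thesis using ab assms(3) by auto
qed

lemma diagonal_entry_cases:
  assumes D: "diagonal_mat r" and s: "s < n"
  shows "r $$ (s,s) = 1 \<or> r $$ (s,s) = nz_prod n r"
proof (cases "r $$ (s,s) = 1")
  case False
  have off: "r $$ (a,b) = 0" if "a < n" "b < n" "a \<noteq> b" for a b
    using D carrier that unfolding diagonal_mat_def by auto
  have nz: "r $$ (a,b) \<noteq> 0 \<longleftrightarrow> b = id a" if "a < n" "b < n" for a b
    using row_unique[OF that(1)] off that by (cases "a = b") auto
  have other: "r $$ (t,t) = 1" if "t < n" "t \<noteq> s" for t
    using minor_eq[OF s that(1) s that(1)] off[OF s that(1)] off[OF that(1) s] that False by auto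
  have "nz_prod n r = (\<Prod>t<n. r $$ (t,t))"
    using monomial_mat_permutes(2)[OF carrier permutes_id nz] by simp
  also have "\<dots> = r $$ (s,s)"
    using prod_lessThan_eq_prod_support[of "{s}" n "\<lambda>t. r $$ (t,t)"] s other by simp
  finally show ?thesis by simp
qed simp

end

lemma Gm1n_reflectionI:
  "r \<in> reflections n (Gmpn m p n) \<Longrightarrow> Gm1n_reflection m n r"
  unfolding reflections_def Gmpn_def by unfold_locales auto

section \<open>Products of two reflections of G(m,p,n)\<close>

lemma diagonal_reflection_entry_pow:
  assumes r: "r \<in> reflections n (Gmpn m p n)" and "diagonal_mat r" "t < n"
  shows "(r $$ (t,t)) ^ (m div p) = 1"
proof -
  interpret Gm1n_reflection m n r by (rule Gm1n_reflectionI[OF r])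
  have "nz_prod n r ^ (m div p) = 1" using r unfolding reflections_def Gmpn_def by simp
  then show ?thesis using diagonal_entry_cases[OF assms(2,3)] by auto
qed

lemma diag_mult_swap_type_reflection:
  assumes "Gm1n_reflection m n r1" "Gm1n_reflection m n r2"
    and i: "i < n" and j: "j < n" and ij: "i \<noteq> j" and r1ij: "r1 $$ (i,j) \<noteq> 0"
    and nz: "(r1 * r2) $$ (i,i) \<noteq> 0"
  shows "(r1 * r2) $$ (i,i) * (r1 * r2) $$ (j,j) = 1"
    and "\<And>t. t < n \<Longrightarrow> t \<noteq> i \<Longrightarrow> t \<noteq> j \<Longrightarrow> (r1 * r2) $$ (t,t) = 1"
proof -
  interpret R1: Gm1n_reflection m n r1 by fact
  interpret R2: Gm1n_reflection m n r2 by fact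
  have entry: "(r1 * r2) $$ (x,y) = r1 $$ (x,s) * r2 $$ (s,y)"
    if "x < n" "y < n" "s < n" "r1 $$ (x,s) \<noteq> 0" for x y s
    by (rule index_mult_mat_row_single[OF R1.carrier R2.carrier that(1-3)])
      (use R1.row_zero[OF that(1,3,4)] in auto)
  note s1 = R1.swap_type[OF i j ij r1ij]
  have r1ji: "r1 $$ (j,i) \<noteq> 0" using s1(3) by auto
  have "r2 $$ (j,i) \<noteq> 0" using nz entry[OF i i j r1ij] by auto
  note s2 = R2.swap_type[OF j i ij[symmetric] this]
  show "(r1 * r2) $$ (i,i) * (r1 * r2) $$ (j,j) = 1"
    unfolding entry[OF i i j r1ij] entry[OF j j i r1ji] using s1(3) s2(3)
    by (simp add: algebra_simps)
  fix t assume t: "t < n" "t \<noteq> i" "t \<noteq> j"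
  then have "r1 $$ (t,t) = 1" by (rule s1(4))
  then show "(r1 * r2) $$ (t,t) = 1"
    using entry[OF t(1) t(1) t(1)] s2(4)[OF t(1) t(3) t(2)] by simp
qed

text \<open>The first case arises when both factors are of transposition type on the pair i, j, the
  second when both are diagonal.\<close>
lemma diag_mult_reflections_cases:
  assumes r1: "r1 \<in> reflections n (Gmpn m p n)" and r2: "r2 \<in> reflections n (Gmpn m p n)"
    and nz: "\<And>t. t < n \<Longrightarrow> (r1 * r2) $$ (t,t) \<noteq> 0"
  obtains i j where "i < n" "j < n" "i \<noteq> j" "(r1 * r2) $$ (i,i) * (r1 * r2) $$ (j,j) = 1"
      "\<And>t. t < n \<Longrightarrow> t \<noteq> i \<Longrightarrow> t \<noteq> j \<Longrightarrow> (r1 * r2) $$ (t,t) = 1"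
    | "\<And>t. t < n \<Longrightarrow> ((r1 * r2) $$ (t,t)) ^ (m div p) = 1"
proof -
  note R1 = Gm1n_reflectionI[OF r1] and R2 = Gm1n_reflectionI[OF r2]
  have c1: "r1 \<in> carrier_mat n n" and c2: "r2 \<in> carrier_mat n n"
    using Gm1n_reflection.carrier R1 R2 by blast+
  show ?thesis
  proof (cases "diagonal_mat r1")
    case False
    then obtain i j where "i < n" "j < n" "i \<noteq> j" "r1 $$ (i,j) \<noteq> 0"
      using c1 unfolding diagonal_mat_def by auto
    with diag_mult_swap_type_reflection[OF R1 R2 this] nz that(1) show ?thesis by blast
  next
    case D1: True
    have entry: "(r1 * r2) $$ (t,t) = r1 $$ (t,t) * r2 $$ (t,t)" if "t < n" for t
      by (rule index_mult_diagonal_mat_left[OF D1 c1 c2 that that])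
    have D2: "diagonal_mat r2"
    proof (rule ccontr)
      assume "\<not> diagonal_mat r2"
      then obtain i j where ij: "i < n" "j < n" "i \<noteq> j" "r2 $$ (i,j) \<noteq> 0"
        using c2 unfolding diagonal_mat_def by auto
      show False using Gm1n_reflection.swap_type(1)[OF R2 ij] entry[OF ij(1)] nz[OF ij(1)] by simp
    qed
    show ?thesis
      using that(2) entry diagonal_reflection_entry_pow[OF r1 D1] diagonal_reflection_entry_pow[OF r2 D2]
      by (simp add: power_mult_distrib)
  qed
qed

section \<open>Determinants of reflections of G(m,m,n)\<close>

lemma (in Gm1n_reflection) det_swap_type:
  assumes i: "i < n" and j: "j < n" and ij: "i \<noteq> j" and nz: "r $$ (i,j) \<noteq> 0"
  shows "det r = -1"
proof -
  note sw = swap_type[OF assms] and supp = swap_type_support[OF assms]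
  define B where "B = swaprows i j r"
  have B: "B \<in> carrier_mat n n" unfolding B_def using carrier by auto
  have Bi: "B $$ (x,y) = (if i = x then r $$ (j,y) else if j = x then r $$ (i,y) else r $$ (x,y))"
    if "x < n" "y < n" for x y unfolding B_def using that carrier by auto
  have "upper_triangular B"
    unfolding upper_triangular_def
  proof (intro allI impI)
    fix x y assume "x < dim_row B" "y < x"
    then have x: "x < n" and y: "y < n" and xy: "x \<noteq> y" using B by auto
    consider "x = i" | "x = j" | "x \<noteq> i" "x \<noteq> j" by blast
    then show "B $$ (x,y) = 0"
      by cases (use Bi[OF x y] sw supp[OF j y] supp[OF i y] supp[OF x y xy] xy ij in auto)
  qed
  then have "det B = prod_list (diag_mat B)" by (rule det_upper_triangular[OF _ B])
  also have "\<dots> = (\<Prod>t<n. B $$ (t,t))"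
    unfolding prod_list_diag_prod using B by (simp add: atLeast0LessThan)
  also have "\<dots> = (\<Prod>t\<in>{i,j}. B $$ (t,t))"
    by (rule prod_lessThan_eq_prod_support) (use i j Bi sw(4) in auto)
  also have "\<dots> = 1" using Bi[OF i i] Bi[OF j j] sw(3) ij by (simp add: mult.commute)
  finally have "det B = 1" .
  moreover have "det B = - det r" unfolding B_def by (rule det_swaprows[OF i j ij carrier])
  ultimately show ?thesis by (metis minus_minus)
qed

text \<open>In G(m,m,n) the product of the nonzero entries is 1, so a diagonal reflection, having a
  single entry different from 1, cannot occur.\<close>
lemma det_reflection_Gmmn:
  assumes r: "r \<in> reflections n (Gmpn m m n)" and m: "0 < m"
  shows "det r = -1"
proof -
  interpret Gm1n_reflection m n r by (rule Gm1n_reflectionI[OF r])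
  show ?thesis
  proof (cases "diagonal_mat r")
    case True
    have "nz_prod n r = 1" using r m unfolding reflections_def Gmpn_def by simp
    then have "r = 1\<^sub>m n"
      using carrier diagonal_entry_cases[OF True] True
      by (intro eq_matI) (auto simp: diagonal_mat_def)
    then show ?thesis using reflection unfolding is_reflection_def by simp
  next
    case False
    then obtain i j where "i < n" "j < n" "i \<noteq> j" "r $$ (i,j) \<noteq> 0"
      using carrier unfolding diagonal_mat_def by auto
    then show ?thesis by (rule det_swap_type)
  qed
qed

lemma det_foldr_reflections_Gmmn:
  assumes "set rs \<subseteq> reflections n (Gmpn m m n)" and "0 < m"
  shows "foldr (*) rs (1\<^sub>m n) \<in> carrier_mat n n \<and> det (foldr (*) rs (1\<^sub>m n)) = (-1) ^ length rs"
  using assms(1)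
proof (induction rs)
  case (Cons r rs)
  then have r: "r \<in> reflections n (Gmpn m m n)" and IH: "foldr (*) rs (1\<^sub>m n) \<in> carrier_mat n n"
      "det (foldr (*) rs (1\<^sub>m n)) = (-1) ^ length rs"
    by auto
  have c: "r \<in> carrier_mat n n" using r unfolding reflections_def is_reflection_def by simp
  show ?case
    using det_mult[OF c IH(1)] det_reflection_Gmmn[OF r assms(2)] IH c by simp
qed simp

lemma refl_length_neqI:
  assumes "set rs \<subseteq> reflections n G" "foldr (*) rs (1\<^sub>m n) = g"
    and "\<And>rs'. set rs' \<subseteq> reflections n G \<Longrightarrow> foldr (*) rs' (1\<^sub>m n) = g \<Longrightarrow> length rs' \<noteq> c"
  shows "refl_length n G g \<noteq> c"
proof -
  let ?P = "\<lambda>k. \<exists>rs. length rs = k \<and> set rs \<subseteq> reflections n G \<and> foldr (*) rs (1\<^sub>m n) = g"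
  have "?P (length rs)" using assms(1,2) by blast
  then have "?P (refl_length n G g)" unfolding refl_length_def by (rule LeastI)
  then show ?thesis using assms(3) by blast
qed

section \<open>The counterexamples\<close>

lemma swap_swap_diag_factorization:
  assumes i: "i < n" and j: "j < n" and ij: "i \<noteq> j" and z: "z \<noteq> 0" and p: "0 < p"
  shows "swap_mat n i j 1 * (swap_mat n i j z * mat_diag n (\<lambda>t. if t = j then z ^ p else 1))
    = mat_diag n (\<lambda>t. if t = i then z else if t = j then z ^ (p - 1) else 1)"
proof -
  have "z ^ p = z * z ^ (p - 1)" using p by (cases p) auto
  then have zp: "inverse z * z ^ p = z ^ (p - 1)" using z by simp
  have "swap_mat n i j 1 * (swap_mat n i j z * mat_diag n (\<lambda>t. if t = j then z ^ p else 1))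
      = swap_mat n i j 1 * swap_mat n i j z * mat_diag n (\<lambda>t. if t = j then z ^ p else 1)"
    by (rule assoc_mult_mat[symmetric]) auto
  also have "\<dots> = mat_diag n (\<lambda>t. (if t = i then z / 1 else if t = j then 1 / z else 1)
      * (if t = j then z ^ p else 1))"
    unfolding swap_mat_mult[OF i j ij] mat_diag_diag ..
  also have "\<dots> = mat_diag n (\<lambda>t. if t = i then z else if t = j then z ^ (p - 1) else 1)"
    using zp ij by (intro arg_cong[where f = "mat_diag n"] ext) (auto simp: divide_inverse)
  finally show ?thesis .
qed

lemma two_swap_pairs_factorization:
  assumes i: "i < n" and j: "j < n" and k: "k < n" and ij: "i \<noteq> j" "i \<noteq> k" "j \<noteq> k"
    and z: "z \<noteq> 0"
  shows "swap_mat n i k 1 * (swap_mat n i k z * (swap_mat n j k 1 * swap_mat n j k z))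
    = mat_diag n (\<lambda>t. if t = i \<or> t = j then z else if t = k then inverse (z ^ 2) else 1)"
proof -
  have "swap_mat n i k 1 * (swap_mat n i k z * (swap_mat n j k 1 * swap_mat n j k z))
      = (swap_mat n i k 1 * swap_mat n i k z) * (swap_mat n j k 1 * swap_mat n j k z)"
    by (rule assoc_mult_mat[symmetric]) auto
  then show ?thesis
    unfolding swap_mat_mult[OF i k ij(2)] swap_mat_mult[OF j k ij(3)] mat_diag_diag
    using ij z by (auto intro!: arg_cong[where f = "mat_diag n"] simp: divide_inverse power2_eq_square)
qed

lemma length_neq_2_if_foldr_reflections_eq_mat_diag:
  assumes n: "2 \<le> n" and d: "d0 \<noteq> 0" "d1 \<noteq> 0" "d0 \<noteq> 1" "d1 \<noteq> 1" "d0 * d1 \<noteq> 1"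
    "d0 ^ (m div p) \<noteq> 1"
    and rs: "set rs \<subseteq> reflections n (Gmpn m p n)"
      "foldr (*) rs (1\<^sub>m n) = mat_diag n (\<lambda>t. if t = 0 then d0 else if t = 1 then d1 else 1)"
  shows "length rs \<noteq> 2"
proof
  assume "length rs = 2"
  then obtain r1 r2 where "rs = [r1, r2]" by (auto simp: length_Suc_conv numeral_2_eq_2)
  with rs have r1: "r1 \<in> reflections n (Gmpn m p n)" and r2: "r2 \<in> reflections n (Gmpn m p n)"
    and "r1 * r2 = mat_diag n (\<lambda>t. if t = 0 then d0 else if t = 1 then d1 else 1)"
    by (auto simp: reflections_def is_reflection_def)
  then have diag: "(r1 * r2) $$ (t,t) = (if t = 0 then d0 else if t = 1 then d1 else 1)" if "t < n" for t
    using that by simp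
  have "(r1 * r2) $$ (t,t) \<noteq> 0" if "t < n" for t using diag[OF that] d by simp
  then show False
  proof (rule diag_mult_reflections_cases[OF r1 r2])
    fix i j assume "i < n" "j < n" "i \<noteq> j"
      and prod: "(r1 * r2) $$ (i,i) * (r1 * r2) $$ (j,j) = 1"
      and one: "\<And>t. t < n \<Longrightarrow> t \<noteq> i \<Longrightarrow> t \<noteq> j \<Longrightarrow> (r1 * r2) $$ (t,t) = 1"
    have "0 \<in> {i,j}" "1 \<in> {i,j}" using one[of 0] one[of 1] diag[of 0] diag[of 1] n d by force+
    then show False using prod diag[of 0] diag[of 1] n d \<open>i \<noteq> j\<close> by (auto simp: mult.commute)
  next
    assume "\<And>t. t < n \<Longrightarrow> ((r1 * r2) $$ (t,t)) ^ (m div p) = 1"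
    from this[of 0] show False using diag[of 0] n d by simp
  qed
qed

theorem refl_length_neq_codim_Gmpn:
  assumes p: "1 < p" "p < m" "p dvd m" and n: "2 \<le> n"
  shows "\<exists>g\<in>Gmpn m p n. refl_length n (Gmpn m p n) g \<noteq> codim n g"
proof -
  obtain z :: complex where zm: "z ^ m = 1" and prim: "\<And>k. 0 < k \<Longrightarrow> k < m \<Longrightarrow> z ^ k \<noteq> 1"
    using exists_primitive_root_of_unity[of m] p by auto
  obtain q where q: "m = p * q" using p(3) by blast
  have z0: "z \<noteq> 0" using zm p by (auto simp: power_0_left)
  have zpow: "(z ^ k) ^ m = 1" for k by (rule root_of_unity_power[OF zm])
  have mq: "m div p = q" "0 < q" "q < m" using q p by auto
  define f where "f t = (if t = 0 then z else if t = 1 then z ^ (p - 1) else 1)" for t :: nat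
  have zp: "z * z ^ (p - 1) = z ^ p" using p by (cases p) auto
  have "mat_diag n f \<in> Gmpn m p n"
  proof (rule mat_diag_in_Gmpn)
    have "(\<Prod>t<n. f t) = f 0 * f 1"
      using prod_lessThan_eq_prod_support[of "{0,1}" n f] n by (simp add: f_def)
    then show "(\<Prod>t<n. f t) ^ (m div p) = 1" using zp zm q mq by (simp add: f_def power_mult)
  qed (use p zm zpow in \<open>auto simp: f_def\<close>)
  moreover have "codim n (mat_diag n f) = 2"
    by (rule codim_mat_diag[OF n]) (use prim[of 1] prim[of "p - 1"] p in \<open>auto simp: f_def\<close>)
  moreover have "refl_length n (Gmpn m p n) (mat_diag n f) \<noteq> 2"
  proof (rule refl_length_neqI)
    let ?rs = "[swap_mat n 0 1 1, swap_mat n 0 1 z, mat_diag n (\<lambda>t. if t = 1 then z ^ p else 1)]"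
    show "set ?rs \<subseteq> reflections n (Gmpn m p n)"
      using swap_mat_in_reflections[of 0 n 1] mat_diag_single_in_reflections[of 1 n m "z ^ p" p]
        n p z0 zm zpow prim[of p] q mq by (auto simp: power_mult)
    show "foldr (*) ?rs (1\<^sub>m n) = mat_diag n f"
      using swap_swap_diag_factorization[of 0 n 1 z p] n z0 p by (simp add: f_def[abs_def])
    fix rs assume "set rs \<subseteq> reflections n (Gmpn m p n)" "foldr (*) rs (1\<^sub>m n) = mat_diag n f"
    then show "length rs \<noteq> 2"
      using length_neq_2_if_foldr_reflections_eq_mat_diag[OF n, of z "z ^ (p - 1)" m p rs]
        z0 zp prim[of 1] prim[of "p - 1"] prim[of p] prim[of q] p mq
      by (auto simp: f_def[abs_def])
  qed
  ultimately show ?thesis by (intro bexI[of _ "mat_diag n f"]) simp_all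
qed

theorem refl_length_neq_codim_Gmmn:
  assumes m: "3 \<le> m" and n: "3 \<le> n"
  shows "\<exists>g\<in>Gmpn m m n. refl_length n (Gmpn m m n) g \<noteq> codim n g"
proof -
  obtain z :: complex where zm: "z ^ m = 1" and prim: "\<And>k. 0 < k \<Longrightarrow> k < m \<Longrightarrow> z ^ k \<noteq> 1"
    using exists_primitive_root_of_unity[of m] m by auto
  have z0: "z \<noteq> 0" using zm m by (auto simp: power_0_left)
  define f where "f t = (if t = 0 \<or> t = 1 then z else if t = 2 then inverse (z ^ 2) else 1)" for t :: nat
  have prod: "(\<Prod>t<n. f t) = 1"
    using prod_lessThan_eq_prod_support[of "{0,1,2}" n f] n z0
    by (simp add: f_def power2_eq_square field_simps)
  have "mat_diag n f \<in> Gmpn m m n"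
    by (rule mat_diag_in_Gmpn)
      (use m zm prod root_of_unity_power[OF zm, of 2] in \<open>auto simp: f_def power_inverse\<close>)
  moreover have "codim n (mat_diag n f) = 3"
    by (rule codim_mat_diag[OF n]) (use prim[of 1] prim[of 2] m in \<open>auto simp: f_def\<close>)
  moreover have "refl_length n (Gmpn m m n) (mat_diag n f) \<noteq> 3"
  proof (rule refl_length_neqI)
    let ?rs = "[swap_mat n 0 2 1, swap_mat n 0 2 z, swap_mat n 1 2 1, swap_mat n 1 2 z]"
    show "set ?rs \<subseteq> reflections n (Gmpn m m n)"
      using swap_mat_in_reflections[of _ n _ _ m m] n z0 zm by auto
    show "foldr (*) ?rs (1\<^sub>m n) = mat_diag n f"
      using two_swap_pairs_factorization[of 0 n 1 2 z] n z0 by (simp add: f_def[abs_def])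
    fix rs assume "set rs \<subseteq> reflections n (Gmpn m m n)" "foldr (*) rs (1\<^sub>m n) = mat_diag n f"
    then have "(-1) ^ length rs = (\<Prod>t<n. f t)"
      using det_foldr_reflections_Gmmn[of rs n m] det_mat_diag[of n f] m by simp
    then show "length rs \<noteq> 3" using prod by auto
  qed
  ultimately show ?thesis by (intro bexI[of _ "mat_diag n f"]) simp_all
qed

theorem mainTheorem8:
  shows "(\<forall>m p n. 1 < p \<and> p < m \<and> p dvd m \<and> 2 \<le> n \<longrightarrow>
            (\<exists>g\<in>Gmpn m p n. refl_length n (Gmpn m p n) g \<noteq> codim n g))
       \<and> (\<forall>m n. 3 \<le> m \<and> 3 \<le> n \<longrightarrow>
            (\<exists>g\<in>Gmpn m m n. refl_length n (Gmpn m m n) g \<noteq> codim n g))"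
  using refl_length_neq_codim_Gmpn refl_length_neq_codim_Gmmn by blast

end
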